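(* Let $R_0>0$, $T>0$, $\lambda_n=(n\pi/R_0)^2$ for $n\ge1$, let $a:[0,T]\to\mathbb{R}$ satisfy $0<a_0\le a(t)\le a_1$, and let $B^H$ be a fractional Brownian motion with Hurst index $H\in(0,1)$. If $h\in L^\infty(0,T)$ is nonnegative and its support has positive measure, then there is a constant $C>0$ independent of $n$ such that for all $n\ge1$ $$\Big|\int_0^T h(\tau)e^{-\lambda_n\int_\tau^T a(s)ds}\,d\tau\Big|\le \frac{C}{\lambda_n},\qquad \mathbb{E}\Big[\Big(\int_0^T e^{-\lambda_n\int_\tau^T a(s)ds}\,dB^H(\tau)\Big)^2\Big]\le\frac{C}{\lambda_n^{p}},$$ where $p=\min\{2H,1\}$.
   Context: A fractional Brownian motion $B^H$ is a centered Gaussian process with $B^H(0)=0$ and covariance $\mathbb{E}[B^H(t)B^H(s)]=\frac12(t^{2H}+s^{2H}-|t-s|^{2H})$; the stochastic integral of a deterministic integrand is the Wiener integral with respect to $B^H$. (These quantities are the factors relating $f_n,g_n^2$ to $\mathbb{E}(u_n(T))$ and $\mathbb{V}(u_n(T))$ for the final-time Fourier coefficients of the solution of $u_t=a(t)[u_{rr}+\frac2r u_r]+f(r)h(t)+g(r)\dot B^H(t)$ on a ball of radius $R_0$; their decay expresses ill-posedness of recovering $f$ and $|g|$.) *)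

theory Defs
  imports "HOL-Probability.Probability"
begin

definition eigval :: "real \<Rightarrow> nat \<Rightarrow> real" where
  "eigval R0 n = (real n * pi / R0) ^ 2"

definition fbm_cov :: "real \<Rightarrow> real \<Rightarrow> real \<Rightarrow> real" where
  "fbm_cov H t s = (\<bar>t\<bar> powr (2*H) + \<bar>s\<bar> powr (2*H) - \<bar>t - s\<bar> powr (2*H)) / 2"

text \<open>Gaussianity: every finite linear combination is a centered normal variable
  (degenerate, i.e. a.e. zero, if its variance vanishes).\<close>
definition fBm :: "'a measure \<Rightarrow> real \<Rightarrow> (real \<Rightarrow> 'a \<Rightarrow> real) \<Rightarrow> bool" where
  "fBm M H B \<longleftrightarrow>
     prob_space M \<and>
     (\<forall>t\<ge>0. B t \<in> borel_measurable M) \<and>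
     (\<forall>t\<ge>0. integrable M (\<lambda>\<omega>. (B t \<omega>)\<^sup>2)) \<and>
     (\<forall>\<omega>\<in>space M. B 0 \<omega> = 0) \<and>
     (\<forall>t\<ge>0. (\<integral>\<omega>. B t \<omega> \<partial>M) = 0) \<and>
     (\<forall>t\<ge>0. \<forall>s\<ge>0. (\<integral>\<omega>. B t \<omega> * B s \<omega> \<partial>M) = fbm_cov H t s) \<and>
     (\<forall>cs ts. length cs = length ts \<longrightarrow> (\<forall>t\<in>set ts. t \<ge> 0) \<longrightarrow>
        (let X = (\<lambda>\<omega>. \<Sum>i<length ts. cs ! i * B (ts ! i) \<omega>);
             v = (\<Sum>i<length ts. \<Sum>j<length ts. cs ! i * cs ! j * fbm_cov H (ts ! i) (ts ! j))
         in (v = 0 \<longrightarrow> (AE \<omega> in M. X \<omega> = 0)) \<and>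
            (v > 0 \<longrightarrow> distributed M lborel X (\<lambda>x. ennreal (normal_density 0 (sqrt v) x)))))"

definition riemann_sum :: "(real \<Rightarrow> 'a \<Rightarrow> real) \<Rightarrow> (real \<Rightarrow> real) \<Rightarrow> real \<Rightarrow> nat \<Rightarrow> 'a \<Rightarrow> real" where
  "riemann_sum B f T k \<omega> =
     (\<Sum>i<k. f (T * real i / real k) * (B (T * real (Suc i) / real k) \<omega> - B (T * real i / real k) \<omega>))"

definition is_wiener_integral ::
  "'a measure \<Rightarrow> (real \<Rightarrow> 'a \<Rightarrow> real) \<Rightarrow> (real \<Rightarrow> real) \<Rightarrow> real \<Rightarrow> ('a \<Rightarrow> real) \<Rightarrow> bool" where
  "is_wiener_integral M B f T X \<longleftrightarrow>
     X \<in> borel_measurable M \<and> integrable M (\<lambda>\<omega>. (X \<omega>)\<^sup>2) \<and>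
     (\<forall>k. integrable M (\<lambda>\<omega>. (riemann_sum B f T k \<omega> - X \<omega>)\<^sup>2)) \<and>
     ((\<lambda>k. \<integral>\<omega>. (riemann_sum B f T k \<omega> - X \<omega>)\<^sup>2 \<partial>M) \<longlonglongrightarrow> 0)"

end

theory Submission
  imports Defs
begin

text \<open>
Write \<phi>(\<tau>) for the integral of a over [\<tau>, T], so that \<phi>(\<tau>) \<ge> a0 (T - \<tau>). The source integral
is then at most sup |h| times the integral of exp(-\<lambda> a0 (T - \<tau>)) over [0, T], hence at most
sup |h| / (a0 \<lambda>).

For the noise term the integrand f = exp(-\<lambda> \<phi>) increases on [0, T] to f(T) = 1. Summation by parts
writes a Riemann sum as \<Sum> w_j (B(T) - B(t_j)) with weights w_j \<ge> 0 of total mass 1, so by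
Cauchy-Schwarz and E (B(q) - B(p))^2 = |q - p|^(2H) its second moment is at most
\<Sum> w_j (T - t_j)^(2H). The same argument, applied to a partition and its refinement, shows that
the Riemann sums are Cauchy in L^2; their limit comes from an a.e. convergent fast subsequence and
Fatou's lemma. Finally (T - \<tau>)^(2H) \<surd>f(\<tau>) = O(\<lambda>^(-2H)), while the discrete analogue of
\<integral> df / \<surd>f = 2 \<Delta>\<surd>f gives \<Sum> w_j / \<surd>f(t_j) \<le> 2. Hence the second moment is O(\<lambda>^(-2H)),
which is O(\<lambda>^(-min(2H, 1))) because \<lambda>_n \<ge> \<lambda>_1.
\<close>

section \<open>Limits in L^2\<close>

lemma square_diff_le: "((x::real) - y)\<^sup>2 \<le> 2 * (x - z)\<^sup>2 + 2 * (y - z)\<^sup>2"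
proof -
  have "0 \<le> ((x - z) + (y - z))\<^sup>2" by simp
  then show ?thesis by (simp add: power2_eq_square algebra_simps)
qed

lemma integrable_integral_mono_nonneg:
  fixes f g :: "'a \<Rightarrow> real"
  assumes g: "integrable M g" and f: "f \<in> borel_measurable M"
    and nonneg: "\<And>x. 0 \<le> f x" and le: "\<And>x. f x \<le> g x"
  shows "integrable M f \<and> integral\<^sup>L M f \<le> integral\<^sup>L M g"
proof -
  have "integrable M f"
    by (rule Bochner_Integration.integrable_bound[OF g f])
      (use nonneg le in \<open>auto intro: order_trans[OF _ abs_ge_self]\<close>)
  with integral_mono[OF _ g le] show ?thesis by blast
qed

lemma integrable_square_integral_le_cong:
  assumes "integrable M (\<lambda>\<omega>. (Y \<omega>)\<^sup>2) \<and> (\<integral>\<omega>. (Y \<omega>)\<^sup>2 \<partial>M) \<le> c"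
    and "\<And>\<omega>. \<omega> \<in> space M \<Longrightarrow> X \<omega> = Y \<omega>"
  shows "integrable M (\<lambda>\<omega>. (X \<omega>)\<^sup>2) \<and> (\<integral>\<omega>. (X \<omega>)\<^sup>2 \<partial>M) \<le> c"
proof -
  have "integrable M (\<lambda>\<omega>. (X \<omega>)\<^sup>2) = integrable M (\<lambda>\<omega>. (Y \<omega>)\<^sup>2)"
    "(\<integral>\<omega>. (X \<omega>)\<^sup>2 \<partial>M) = (\<integral>\<omega>. (Y \<omega>)\<^sup>2 \<partial>M)"
    using assms(2)
    by (auto intro!: Bochner_Integration.integrable_cong Bochner_Integration.integral_cong)
  with assms(1) show ?thesis by simp
qed

lemma square_integrable_mult:
  fixes X Y :: "'a \<Rightarrow> real"
  assumes [measurable]: "X \<in> borel_measurable M" "Y \<in> borel_measurable M"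
    and "integrable M (\<lambda>\<omega>. (X \<omega>)\<^sup>2)" "integrable M (\<lambda>\<omega>. (Y \<omega>)\<^sup>2)"
  shows "integrable M (\<lambda>\<omega>. X \<omega> * Y \<omega>)"
proof (rule Bochner_Integration.integrable_bound)
  show "integrable M (\<lambda>\<omega>. (X \<omega>)\<^sup>2 + (Y \<omega>)\<^sup>2)" using assms by auto
  have "\<bar>x * y\<bar> \<le> x\<^sup>2 + y\<^sup>2" for x y :: real
    using sum_squares_bound[of "\<bar>x\<bar>" "\<bar>y\<bar>"] mult_nonneg_nonneg[OF abs_ge_zero abs_ge_zero, of x y]
    unfolding abs_mult power2_abs by linarith
  then show "AE \<omega> in M. norm (X \<omega> * Y \<omega>) \<le> norm ((X \<omega>)\<^sup>2 + (Y \<omega>)\<^sup>2)" by simp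
qed simp

lemma abs_le_geometric_plus_square: "\<bar>x::real\<bar> \<le> (1/2)^j + 2^j * x\<^sup>2"
proof (cases "\<bar>x\<bar> \<le> (1/2)^j")
  case False
  then have "1 \<le> 2^j * \<bar>x\<bar>" by (simp add: power_divide field_simps)
  then have "\<bar>x\<bar> \<le> 2^j * \<bar>x\<bar> * \<bar>x\<bar>"
    using mult_right_mono[of 1 "2^j * \<bar>x\<bar>" "\<bar>x\<bar>"] by simp
  then show ?thesis by (simp add: power2_eq_square add_increasing)
qed (simp add: add_increasing2)

lemma AE_summable_of_weighted_square_integrals:
  fixes d :: "nat \<Rightarrow> 'a \<Rightarrow> real"
  assumes [measurable]: "\<And>j. d j \<in> borel_measurable M"
    and int: "\<And>j. integrable M (\<lambda>\<omega>. (d j \<omega>)\<^sup>2)"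
    and summable: "summable (\<lambda>j. 2^j * (\<integral>\<omega>. (d j \<omega>)\<^sup>2 \<partial>M))"
  shows "AE \<omega> in M. summable (\<lambda>j. d j \<omega>)"
proof -
  define G where "G \<omega> = (\<Sum>j. ennreal (2^j * (d j \<omega>)\<^sup>2))" for \<omega>
  have "(\<integral>\<^sup>+\<omega>. G \<omega> \<partial>M) = (\<Sum>j. \<integral>\<^sup>+\<omega>. ennreal (2^j * (d j \<omega>)\<^sup>2) \<partial>M)"
    unfolding G_def by (rule nn_integral_suminf) measurable
  also have "\<dots> = (\<Sum>j. ennreal (2^j * (\<integral>\<omega>. (d j \<omega>)\<^sup>2 \<partial>M)))"
    by (intro suminf_cong, subst nn_integral_eq_integral) (use int in auto)
  also have "\<dots> = ennreal (\<Sum>j. 2^j * (\<integral>\<omega>. (d j \<omega>)\<^sup>2 \<partial>M))"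
    by (intro suminf_ennreal2 summable) simp
  finally have "(\<integral>\<^sup>+\<omega>. G \<omega> \<partial>M) \<noteq> \<infinity>" by simp
  then have "AE \<omega> in M. G \<omega> \<noteq> \<infinity>"
    by (intro nn_integral_PInf_AE) (auto simp: G_def)
  then show ?thesis
  proof eventually_elim
    case (elim \<omega>)
    have "summable (\<lambda>j. 2^j * (d j \<omega>)\<^sup>2)"
      by (rule summable_suminf_not_top) (use elim in \<open>auto simp: G_def\<close>)
    then have "summable (\<lambda>j. (1/2::real)^j + 2^j * (d j \<omega>)\<^sup>2)"
      by (intro summable_add summable_geometric) auto
    then show ?case
      by (rule summable_comparison_test[rotated]) (auto intro: abs_le_geometric_plus_square)
  qed
qed

lemma square_integral_le_of_AE_limit:
  fixes Y :: "nat \<Rightarrow> 'a \<Rightarrow> real"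
  assumes [measurable]: "Z \<in> borel_measurable M" "\<And>j. Y j \<in> borel_measurable M"
      "X \<in> borel_measurable M"
    and lim: "AE \<omega> in M. (\<lambda>j. Y j \<omega>) \<longlonglongrightarrow> X \<omega>"
    and int: "\<And>j. integrable M (\<lambda>\<omega>. (Z \<omega> - Y j \<omega>)\<^sup>2)"
    and le: "\<And>j. (\<integral>\<omega>. (Z \<omega> - Y j \<omega>)\<^sup>2 \<partial>M) \<le> b j" and b: "b \<longlonglongrightarrow> \<beta>"
  shows "integrable M (\<lambda>\<omega>. (Z \<omega> - X \<omega>)\<^sup>2) \<and> (\<integral>\<omega>. (Z \<omega> - X \<omega>)\<^sup>2 \<partial>M) \<le> \<beta>"
proof -
  have "(\<integral>\<^sup>+\<omega>. ennreal ((Z \<omega> - X \<omega>)\<^sup>2) \<partial>M) =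
      (\<integral>\<^sup>+\<omega>. liminf (\<lambda>j. ennreal ((Z \<omega> - Y j \<omega>)\<^sup>2)) \<partial>M)"
    using lim
  proof (intro nn_integral_cong_AE, eventually_elim)
    case (elim \<omega>)
    have "(\<lambda>j. ennreal ((Z \<omega> - Y j \<omega>)\<^sup>2)) \<longlonglongrightarrow> ennreal ((Z \<omega> - X \<omega>)\<^sup>2)"
      by (intro tendsto_intros elim)
    from lim_imp_Liminf[OF sequentially_bot this] show ?case by simp
  qed
  also have "\<dots> \<le> liminf (\<lambda>j. \<integral>\<^sup>+\<omega>. ennreal ((Z \<omega> - Y j \<omega>)\<^sup>2) \<partial>M)"
    by (rule nn_integral_liminf) measurable
  also have "\<dots> \<le> liminf (\<lambda>j. ennreal (b j))"
    using int le by (intro Liminf_mono always_eventually allI)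
      (simp add: nn_integral_eq_integral ennreal_leI)
  also have "\<dots> = ennreal \<beta>"
    using lim_imp_Liminf[OF sequentially_bot tendsto_ennrealI[OF b]] by simp
  finally have nn_le: "(\<integral>\<^sup>+\<omega>. ennreal ((Z \<omega> - X \<omega>)\<^sup>2) \<partial>M) \<le> ennreal \<beta>" .
  have integrable: "integrable M (\<lambda>\<omega>. (Z \<omega> - X \<omega>)\<^sup>2)"
    by (rule integrableI_nonneg) (use nn_le in \<open>auto intro: le_less_trans\<close>)
  have "0 \<le> b j" for j
    by (rule order_trans[OF _ le]) (simp add: integral_nonneg_AE)
  then have "\<beta> \<ge> 0" by (intro LIMSEQ_le_const[OF b]) auto
  with nn_le show ?thesis
    by (simp add: integrable nn_integral_eq_integral)
qed

lemma AE_convergent_of_fast_L2_cauchy: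
  fixes Y :: "nat \<Rightarrow> 'a \<Rightarrow> real"
  assumes [measurable]: "\<And>j. Y j \<in> borel_measurable M"
    and int: "\<And>j. integrable M (\<lambda>\<omega>. (Y (Suc j) \<omega> - Y j \<omega>)\<^sup>2)"
    and le: "\<And>j. (\<integral>\<omega>. (Y (Suc j) \<omega> - Y j \<omega>)\<^sup>2 \<partial>M) \<le> c * (1/4)^j"
  shows "AE \<omega> in M. convergent (\<lambda>j. Y j \<omega>)"
proof -
  have norm_le: "norm (2^j * (\<integral>\<omega>. (Y (Suc j) \<omega> - Y j \<omega>)\<^sup>2 \<partial>M)) \<le> c * (1/2)^j" for j
  proof -
    have "norm (2^j * (\<integral>\<omega>. (Y (Suc j) \<omega> - Y j \<omega>)\<^sup>2 \<partial>M)) = 2^j * (\<integral>\<omega>. (Y (Suc j) \<omega> - Y j \<omega>)\<^sup>2 \<partial>M)"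
      by (simp add: integral_nonneg_AE)
    also have "\<dots> \<le> (2::real)^j * (c * (1/4)^j)"
      using le[of j] by (intro mult_left_mono) auto
    also have "\<dots> = c * (1/2)^j"
    proof -
      have "(2::real)^j * (1/4)^j = (1/2)^j" by (simp flip: power_mult_distrib)
      then show ?thesis by (metis mult.left_commute)
    qed
    finally show ?thesis .
  qed
  have "summable (\<lambda>j. c * (1/2::real)^j)" by simp
  then have summable: "summable (\<lambda>j. 2^j * (\<integral>\<omega>. (Y (Suc j) \<omega> - Y j \<omega>)\<^sup>2 \<partial>M))"
    by (rule summable_comparison_test'[OF _ norm_le])
  have "(\<lambda>\<omega>. Y (Suc j) \<omega> - Y j \<omega>) \<in> borel_measurable M" for j
    by measurable
  from AE_summable_of_weighted_square_integrals[OF this int summable]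
  show ?thesis
  proof eventually_elim
    case (elim \<omega>)
    have "(\<lambda>j. Y j \<omega>) = (\<lambda>j. Y 0 \<omega> + (\<Sum>i<j. Y (Suc i) \<omega> - Y i \<omega>))"
      by (subst sum_lessThan_telescope) simp
    with elim show ?case
      by (simp add: convergent_add convergent_const summable_iff_convergent)
  qed
qed

lemma LIMSEQ_zero_fast_indices:
  fixes \<delta> \<epsilon> :: "nat \<Rightarrow> real"
  assumes \<delta>: "\<delta> \<longlonglongrightarrow> 0" and \<epsilon>: "\<And>j. 0 < \<epsilon> j"
  shows "\<exists>n. \<forall>j. N \<le> n j \<and> \<bar>\<delta> (n j)\<bar> \<le> \<epsilon> j"
proof -
  have "\<exists>m\<ge>N. \<bar>\<delta> m\<bar> \<le> \<epsilon> j" for j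
  proof -
    obtain M where "\<And>k. k \<ge> M \<Longrightarrow> \<bar>\<delta> k\<bar> < \<epsilon> j"
      using LIMSEQ_D[OF \<delta> \<epsilon>[of j]] by auto
    then show ?thesis by (intro exI[of _ "max N M"]) (simp add: less_imp_le)
  qed
  then show ?thesis by metis
qed

lemma L2_cauchy_limit:
  fixes S :: "nat \<Rightarrow> 'a \<Rightarrow> real" and \<delta> :: "nat \<Rightarrow> real"
  assumes [measurable]: "\<And>k. S k \<in> borel_measurable M"
    and cauchy: "\<And>k l. k \<ge> 1 \<Longrightarrow> l \<ge> 1 \<Longrightarrow> integrable M (\<lambda>\<omega>. (S k \<omega> - S l \<omega>)\<^sup>2) \<and>
          (\<integral>\<omega>. (S k \<omega> - S l \<omega>)\<^sup>2 \<partial>M) \<le> \<delta> k + \<delta> l"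
    and \<delta>: "\<delta> \<longlonglongrightarrow> 0"
  shows "\<exists>X. X \<in> borel_measurable M \<and> (\<forall>k\<ge>1. integrable M (\<lambda>\<omega>. (S k \<omega> - X \<omega>)\<^sup>2) \<and>
            (\<integral>\<omega>. (S k \<omega> - X \<omega>)\<^sup>2 \<partial>M) \<le> \<delta> k)"
proof -
  obtain n where n: "\<And>j. n j \<ge> 1" and \<delta>_n: "\<And>j. \<bar>\<delta> (n j)\<bar> \<le> (1/4)^j"
    using LIMSEQ_zero_fast_indices[OF \<delta>, of "\<lambda>j. (1/4)^j" 1] by auto
  have "AE \<omega> in M. convergent (\<lambda>j. S (n j) \<omega>)"
  proof (rule AE_convergent_of_fast_L2_cauchy)
    fix j
    show "integrable M (\<lambda>\<omega>. (S (n (Suc j)) \<omega> - S (n j) \<omega>)\<^sup>2)"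
      using cauchy n by blast
    have "(\<integral>\<omega>. (S (n (Suc j)) \<omega> - S (n j) \<omega>)\<^sup>2 \<partial>M) \<le> \<delta> (n (Suc j)) + \<delta> (n j)"
      using cauchy n by blast
    also have "\<dots> \<le> 2 * (1/4)^j"
      using \<delta>_n[of j] \<delta>_n[of "Suc j"] by simp
    finally show "(\<integral>\<omega>. (S (n (Suc j)) \<omega> - S (n j) \<omega>)\<^sup>2 \<partial>M) \<le> 2 * (1/4)^j" .
  qed measurable
  then have X_lim: "AE \<omega> in M. (\<lambda>j. S (n j) \<omega>) \<longlonglongrightarrow> lim (\<lambda>j. S (n j) \<omega>)"
    by eventually_elim (simp add: convergent_LIMSEQ_iff)
  have X_meas: "(\<lambda>\<omega>. lim (\<lambda>j. S (n j) \<omega>)) \<in> borel_measurable M" by measurable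
  have "(\<lambda>j. \<delta> (n j)) \<longlonglongrightarrow> 0"
    by (rule Lim_null_comparison[OF _ LIMSEQ_power_zero[of "1/4::real"]]) (use \<delta>_n in auto)
  then have \<delta>_lim: "(\<lambda>j. \<delta> k + \<delta> (n j)) \<longlonglongrightarrow> \<delta> k" for k
    using tendsto_add[OF tendsto_const, of "\<lambda>j. \<delta> (n j)" 0 sequentially "\<delta> k"] by simp
  have "integrable M (\<lambda>\<omega>. (S k \<omega> - lim (\<lambda>j. S (n j) \<omega>))\<^sup>2) \<and>
      (\<integral>\<omega>. (S k \<omega> - lim (\<lambda>j. S (n j) \<omega>))\<^sup>2 \<partial>M) \<le> \<delta> k" if "k \<ge> 1" for k
    by (rule square_integral_le_of_AE_limit[OF _ _ X_meas X_lim _ _ \<delta>_lim])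
      (use cauchy[OF that n] in auto)
  then show ?thesis
    by (intro exI[of _ "\<lambda>\<omega>. lim (\<lambda>j. S (n j) \<omega>)"]) auto
qed

section \<open>Increments of fractional Brownian motion\<close>

lemma fBm_increment_second_moment:
  assumes fbm: "fBm M H B" and "p \<ge> 0" "q \<ge> 0"
  shows "integrable M (\<lambda>\<omega>. (B q \<omega> - B p \<omega>)\<^sup>2) \<and>
         (\<integral>\<omega>. (B q \<omega> - B p \<omega>)\<^sup>2 \<partial>M) = \<bar>q - p\<bar> powr (2*H)"
proof -
  have [measurable]: "B q \<in> borel_measurable M" "B p \<in> borel_measurable M"
    and sq: "integrable M (\<lambda>\<omega>. (B q \<omega>)\<^sup>2)" "integrable M (\<lambda>\<omega>. (B p \<omega>)\<^sup>2)"
    and cov: "(\<integral>\<omega>. B q \<omega> * B q \<omega> \<partial>M) = fbm_cov H q q" "(\<integral>\<omega>. B p \<omega> * B p \<omega> \<partial>M) = fbm_cov H p p"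
      "(\<integral>\<omega>. B q \<omega> * B p \<omega> \<partial>M) = fbm_cov H q p"
    using fbm assms unfolding fBm_def by auto
  have int: "integrable M (\<lambda>\<omega>. B q \<omega> * B q \<omega>)" "integrable M (\<lambda>\<omega>. B p \<omega> * B p \<omega>)"
      "integrable M (\<lambda>\<omega>. B q \<omega> * B p \<omega>)"
    using sq by (auto intro: square_integrable_mult simp: power2_eq_square)
  have expand: "(B q \<omega> - B p \<omega>)\<^sup>2 = B q \<omega> * B q \<omega> + B p \<omega> * B p \<omega> - 2 * (B q \<omega> * B p \<omega>)" for \<omega>
    by (simp add: power2_eq_square algebra_simps)
  have "(\<integral>\<omega>. (B q \<omega> - B p \<omega>)\<^sup>2 \<partial>M) = fbm_cov H q q + fbm_cov H p p - 2 * fbm_cov H q p"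
    unfolding expand using int cov by simp
  also have "\<dots> = \<bar>q - p\<bar> powr (2*H)"
    unfolding fbm_cov_def using assms by (simp add: field_simps)
  finally show ?thesis unfolding expand using int by auto
qed

lemma square_weighted_sum_le:
  fixes w Y :: "'j \<Rightarrow> real"
  assumes "\<And>j. j \<in> J \<Longrightarrow> w j \<ge> 0"
  shows "(\<Sum>j\<in>J. w j * Y j)\<^sup>2 \<le> (\<Sum>j\<in>J. w j) * (\<Sum>j\<in>J. w j * (Y j)\<^sup>2)"
proof -
  have "(\<Sum>j\<in>J. w j * Y j) = (\<Sum>j\<in>J. sqrt (w j) * (sqrt (w j) * Y j))"
    using assms by (intro sum.cong) (auto simp flip: mult.assoc)
  also have "(\<dots>)\<^sup>2 \<le> (\<Sum>j\<in>J. (sqrt (w j))\<^sup>2) * (\<Sum>j\<in>J. (sqrt (w j) * Y j)\<^sup>2)"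
    by (rule Cauchy_Schwarz_ineq_sum)
  also have "\<dots> = (\<Sum>j\<in>J. w j) * (\<Sum>j\<in>J. w j * (Y j)\<^sup>2)"
    using assms by (auto intro!: arg_cong2[where f="(*)"] sum.cong simp: power_mult_distrib)
  finally show ?thesis .
qed

lemma fBm_weighted_increments_second_moment_le:
  fixes w p q :: "'j \<Rightarrow> real"
  assumes fbm: "fBm M H B" and "finite J"
    and nonneg: "\<And>j. j \<in> J \<Longrightarrow> w j \<ge> 0 \<and> p j \<ge> 0 \<and> q j \<ge> 0"
  shows "integrable M (\<lambda>\<omega>. (\<Sum>j\<in>J. w j * (B (q j) \<omega> - B (p j) \<omega>))\<^sup>2) \<and>
         (\<integral>\<omega>. (\<Sum>j\<in>J. w j * (B (q j) \<omega> - B (p j) \<omega>))\<^sup>2 \<partial>M)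
            \<le> (\<Sum>j\<in>J. w j) * (\<Sum>j\<in>J. w j * \<bar>q j - p j\<bar> powr (2*H))"
proof -
  have [measurable]: "\<And>t. t \<ge> 0 \<Longrightarrow> B t \<in> borel_measurable M"
    using fbm unfolding fBm_def by auto
  note incr = fBm_increment_second_moment[OF fbm]
  let ?U = "\<lambda>\<omega>. (\<Sum>j\<in>J. w j) * (\<Sum>j\<in>J. w j * (B (q j) \<omega> - B (p j) \<omega>)\<^sup>2)"
  have "integrable M ?U"
    using incr nonneg by (intro integrable_mult_right integrable_sum) auto
  moreover have "(\<lambda>\<omega>. (\<Sum>j\<in>J. w j * (B (q j) \<omega> - B (p j) \<omega>))\<^sup>2) \<in> borel_measurable M"
    using nonneg by (intro borel_measurable_power borel_measurable_sum borel_measurable_times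
        borel_measurable_diff borel_measurable_const) auto
  ultimately have "integrable M (\<lambda>\<omega>. (\<Sum>j\<in>J. w j * (B (q j) \<omega> - B (p j) \<omega>))\<^sup>2) \<and>
      (\<integral>\<omega>. (\<Sum>j\<in>J. w j * (B (q j) \<omega> - B (p j) \<omega>))\<^sup>2 \<partial>M) \<le> integral\<^sup>L M ?U"
    by (rule integrable_integral_mono_nonneg) (use nonneg in \<open>auto intro: square_weighted_sum_le\<close>)
  also have "integral\<^sup>L M ?U = (\<Sum>j\<in>J. w j) * (\<Sum>j\<in>J. w j * \<bar>q j - p j\<bar> powr (2*H))"
    using incr nonneg by (simp add: Bochner_Integration.integral_sum)
  finally show ?thesis .
qed

section \<open>Riemann sums of an increasing integrand\<close>

lemma sum_by_parts:
  fixes F G :: "nat \<Rightarrow> 'a::comm_ring"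
  shows "(\<Sum>i<k. F i * (G (Suc i) - G i)) =
    F 0 * (G k - G 0) + (\<Sum>i<k. (F (Suc i) - F i) * (G k - G (Suc i)))"
proof (induction k)
  case (Suc k)
  have "(\<Sum>i<k. (F (Suc i) - F i) * (G (Suc k) - G (Suc i))) =
        (\<Sum>i<k. (F (Suc i) - F i) * (G k - G (Suc i))) + (\<Sum>i<k. F (Suc i) - F i) * (G (Suc k) - G k)"
    by (simp add: sum_distrib_right flip: sum.distrib) (simp add: algebra_simps)
  with Suc show ?case by (simp add: sum_lessThan_telescope algebra_simps)
qed simp

definition grid :: "real \<Rightarrow> nat \<Rightarrow> nat \<Rightarrow> real" where
  "grid T k i = T * real i / real k"

lemma grid_nonneg: "T \<ge> 0 \<Longrightarrow> grid T k i \<ge> 0"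
  unfolding grid_def by simp

lemma grid_le: "T \<ge> 0 \<Longrightarrow> i \<le> k \<Longrightarrow> grid T k i \<le> T"
  unfolding grid_def by (cases "k = 0") (auto simp: field_simps mult_left_mono)

lemma grid_mono: "T \<ge> 0 \<Longrightarrow> i \<le> j \<Longrightarrow> grid T k i \<le> grid T k j"
  unfolding grid_def by (simp add: divide_right_mono mult_left_mono)

lemma grid_diff: "i \<le> j \<Longrightarrow> grid T k j - grid T k i = T * real (j - i) / real k"
  unfolding grid_def by (simp add: of_nat_diff diff_divide_distrib right_diff_distrib)

lemma grid_0 [simp]: "grid T k 0 = 0"
  unfolding grid_def by simp

lemma grid_last: "k \<ge> 1 \<Longrightarrow> grid T k k = T"
  unfolding grid_def by simp

lemma grid_refine: "m \<ge> 1 \<Longrightarrow> grid T (k*m) (i*m) = grid T k i"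
  unfolding grid_def by (simp add: field_simps)

lemma grid_refine_dist:
  assumes m: "m \<ge> 1" and T: "T \<ge> 0"
  shows "\<bar>grid T (k*m) (Suc j) - grid T k (Suc (j div m))\<bar> \<le> T / real k"
proof -
  define i where "i = j div m"
  have "i * m + j mod m = j" "j mod m < m"
    unfolding i_def using m by simp_all
  then have j_bounds: "Suc j \<le> Suc i * m" "Suc i * m \<le> Suc j + (m - 1)"
    by auto
  have "\<bar>grid T (k*m) (Suc j) - grid T k (Suc i)\<bar> = grid T (k*m) (Suc i * m) - grid T (k*m) (Suc j)"
    using grid_mono[OF T j_bounds(1), of "k*m"] grid_refine[OF m, of T k "Suc i"] by simp
  also have "\<dots> = T * real (Suc i * m - Suc j) / real (k*m)"
    by (rule grid_diff[OF j_bounds(1)])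
  also have "\<dots> \<le> T * real m / real (k*m)"
  proof -
    have "Suc i * m - Suc j \<le> m" using j_bounds m by simp
    then have "real (Suc i * m - Suc j) \<le> real m" by (simp only: of_nat_le_iff)
    then show ?thesis using T by (intro divide_right_mono mult_left_mono) auto
  qed
  also have "\<dots> = T / real k" using m by simp
  finally show ?thesis unfolding i_def .
qed

lemma sum_lessThan_mult_regroup:
  fixes g :: "nat \<Rightarrow> 'b::comm_monoid_add"
  shows "(\<Sum>j<k*m. g j) = (\<Sum>i<k. \<Sum>r<m. g (i*m + r))"
  unfolding sum.nat_group[where k=m, symmetric]
  by (simp add: sum.shift_bounds_nat_ivl[of g 0 _ m, simplified] atLeast0LessThan add.commute)

lemma riemann_sum_by_parts:
  assumes "k \<ge> 1" and "B 0 \<omega> = 0"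
  shows "riemann_sum B f T k \<omega> = f 0 * B T \<omega> +
     (\<Sum>i<k. (f (grid T k (Suc i)) - f (grid T k i)) * (B T \<omega> - B (grid T k (Suc i)) \<omega>))"
  using sum_by_parts[where F="\<lambda>i. f (grid T k i)" and G="\<lambda>i. B (grid T k i) \<omega>" and k=k] assms
  by (simp add: riemann_sum_def grid_def)

lemma riemann_sum_refinement_diff:
  assumes k: "k \<ge> 1" and m: "m \<ge> 1" and B0: "B 0 \<omega> = 0"
  shows "riemann_sum B f T k \<omega> - riemann_sum B f T (k*m) \<omega> =
    (\<Sum>j<k*m. (f (grid T (k*m) (Suc j)) - f (grid T (k*m) j)) *
       (B (grid T (k*m) (Suc j)) \<omega> - B (grid T k (Suc (j div m))) \<omega>))"
proof -
  let ?u = "grid T (k*m)"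
  let ?w = "\<lambda>j. f (?u (Suc j)) - f (?u j)"
  have coarse: "f (grid T k (Suc i)) - f (grid T k i) = (\<Sum>r<m. ?w (i*m + r))" for i
    using sum_lessThan_telescope[of "\<lambda>r. f (?u (i*m + r))" m]
      grid_refine[OF m, of T k i] grid_refine[OF m, of T k "Suc i"]
    by (simp add: add.commute)
  have "(\<Sum>i<k. (f (grid T k (Suc i)) - f (grid T k i)) * (B T \<omega> - B (grid T k (Suc i)) \<omega>)) =
      (\<Sum>i<k. \<Sum>r<m. ?w (i*m + r) * (B T \<omega> - B (grid T k (Suc ((i*m + r) div m))) \<omega>))"
    unfolding coarse sum_distrib_right using m by (intro sum.cong refl) simp
  then have coarse_sum: "riemann_sum B f T k \<omega> = f 0 * B T \<omega> +
      (\<Sum>j<k*m. ?w j * (B T \<omega> - B (grid T k (Suc (j div m))) \<omega>))"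
    unfolding riemann_sum_by_parts[where B=B and \<omega>=\<omega>, OF k B0] sum_lessThan_mult_regroup by simp
  have fine_sum: "riemann_sum B f T (k*m) \<omega> = f 0 * B T \<omega> +
      (\<Sum>j<k*m. ?w j * (B T \<omega> - B (?u (Suc j)) \<omega>))"
    using k m by (intro riemann_sum_by_parts B0) simp
  show ?thesis
    unfolding coarse_sum fine_sum by (simp add: algebra_simps flip: sum_subtractf)
qed

lemma riemann_sum_measurable:
  assumes "fBm M H B" and "T \<ge> 0"
  shows "riemann_sum B f T k \<in> borel_measurable M"
  using assms unfolding riemann_sum_def fBm_def
  by (intro borel_measurable_sum borel_measurable_times borel_measurable_const
      borel_measurable_diff) simp_all

lemma riemann_sum_refinement_second_moment_le:
  fixes f :: "real \<Rightarrow> real"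
  assumes fbm: "fBm M H B" and T: "T > 0" and H: "H > 0"
    and f_mono: "\<And>x y. 0 \<le> x \<Longrightarrow> x \<le> y \<Longrightarrow> y \<le> T \<Longrightarrow> f x \<le> f y"
    and f_T: "f T = 1" and f_0: "f 0 \<ge> 0"
    and k: "k \<ge> 1" and m: "m \<ge> 1"
  shows "integrable M (\<lambda>\<omega>. (riemann_sum B f T k \<omega> - riemann_sum B f T (k*m) \<omega>)\<^sup>2) \<and>
    (\<integral>\<omega>. (riemann_sum B f T k \<omega> - riemann_sum B f T (k*m) \<omega>)\<^sup>2 \<partial>M) \<le> (T / real k) powr (2*H)"
proof -
  define u where "u = grid T (k*m)"
  define w where "w j = f (u (Suc j)) - f (u j)" for j
  define q where "q j = u (Suc j)" for j
  define p where "p j = grid T k (Suc (j div m))" for j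
  have nonneg: "w j \<ge> 0 \<and> p j \<ge> 0 \<and> q j \<ge> 0" if "j \<in> {..<k*m}" for j
  proof -
    have "0 \<le> u j" "u j \<le> u (Suc j)" "u (Suc j) \<le> T"
      unfolding u_def using T that by (simp_all add: grid_nonneg grid_mono grid_le Suc_le_eq)
    then show ?thesis
      unfolding w_def p_def q_def using f_mono T by (simp add: grid_nonneg)
  qed
  have w_sum: "(\<Sum>j<k*m. w j) = 1 - f 0"
    unfolding w_def using sum_lessThan_telescope[of "\<lambda>j. f (u j)" "k*m"] k m f_T
    by (simp add: u_def grid_last)
  have dist: "\<bar>q j - p j\<bar> \<le> T / real k" for j
    unfolding q_def p_def u_def using grid_refine_dist[OF m] T by simp
  have f_01: "0 \<le> 1 - f 0" "1 - f 0 \<le> 1" using f_mono[of 0 T] T f_0 f_T by auto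
  have "(\<Sum>j<k*m. w j) * (\<Sum>j<k*m. w j * \<bar>q j - p j\<bar> powr (2*H))
      \<le> (1 - f 0) * (\<Sum>j<k*m. w j * (T / real k) powr (2*H))"
    unfolding w_sum using f_01 nonneg dist H
    by (intro mult_left_mono sum_mono powr_mono2) auto
  also have "\<dots> = (1 - f 0)\<^sup>2 * (T / real k) powr (2*H)"
    by (simp add: w_sum power2_eq_square flip: sum_distrib_right)
  also have "\<dots> \<le> (T / real k) powr (2*H)"
    using f_01 by (intro mult_left_le_one_le) (auto simp: power_le_one)
  finally have "(\<Sum>j<k*m. w j) * (\<Sum>j<k*m. w j * \<bar>q j - p j\<bar> powr (2*H)) \<le> (T / real k) powr (2*H)" .
  then have "integrable M (\<lambda>\<omega>. (\<Sum>j<k*m. w j * (B (q j) \<omega> - B (p j) \<omega>))\<^sup>2) \<and>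
      (\<integral>\<omega>. (\<Sum>j<k*m. w j * (B (q j) \<omega> - B (p j) \<omega>))\<^sup>2 \<partial>M) \<le> (T / real k) powr (2*H)"
    using fBm_weighted_increments_second_moment_le[where J="{..<k*m}" and w=w and p=p and q=q,
        OF fbm finite_lessThan nonneg]
    by linarith
  moreover have "riemann_sum B f T k \<omega> - riemann_sum B f T (k*m) \<omega> =
      (\<Sum>j<k*m. w j * (B (q j) \<omega> - B (p j) \<omega>))" if "\<omega> \<in> space M" for \<omega>
  proof -
    have "B 0 \<omega> = 0" using fbm that unfolding fBm_def by auto
    then show ?thesis unfolding w_def p_def q_def u_def by (rule riemann_sum_refinement_diff[OF k m])
  qed
  ultimately show ?thesis by (rule integrable_square_integral_le_cong)
qed

lemma riemann_sum_L2_cauchy: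
  fixes f :: "real \<Rightarrow> real"
  assumes fbm: "fBm M H B" and T: "T > 0" and H: "H > 0"
    and f_mono: "\<And>x y. 0 \<le> x \<Longrightarrow> x \<le> y \<Longrightarrow> y \<le> T \<Longrightarrow> f x \<le> f y"
    and f_T: "f T = 1" and f_0: "f 0 \<ge> 0"
    and k: "k \<ge> 1" and l: "l \<ge> 1"
  shows "integrable M (\<lambda>\<omega>. (riemann_sum B f T k \<omega> - riemann_sum B f T l \<omega>)\<^sup>2) \<and>
    (\<integral>\<omega>. (riemann_sum B f T k \<omega> - riemann_sum B f T l \<omega>)\<^sup>2 \<partial>M)
      \<le> 2 * (T / real k) powr (2*H) + 2 * (T / real l) powr (2*H)"
proof -
  let ?S = "riemann_sum B f T"
  have k_kl: "integrable M (\<lambda>\<omega>. (?S k \<omega> - ?S (k*l) \<omega>)\<^sup>2) \<and>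
      (\<integral>\<omega>. (?S k \<omega> - ?S (k*l) \<omega>)\<^sup>2 \<partial>M) \<le> (T / real k) powr (2*H)"
    by (rule riemann_sum_refinement_second_moment_le[OF fbm T H _ f_T f_0 k l]) (fact f_mono)
  have l_kl: "integrable M (\<lambda>\<omega>. (?S l \<omega> - ?S (k*l) \<omega>)\<^sup>2) \<and>
      (\<integral>\<omega>. (?S l \<omega> - ?S (k*l) \<omega>)\<^sup>2 \<partial>M) \<le> (T / real l) powr (2*H)"
    unfolding mult.commute[of k]
    by (rule riemann_sum_refinement_second_moment_le[OF fbm T H _ f_T f_0 l k]) (fact f_mono)
  have [measurable]: "?S j \<in> borel_measurable M" for j
    using riemann_sum_measurable[OF fbm] T by simp
  let ?U = "\<lambda>\<omega>. 2 * (?S k \<omega> - ?S (k*l) \<omega>)\<^sup>2 + 2 * (?S l \<omega> - ?S (k*l) \<omega>)\<^sup>2"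
  have "integrable M (\<lambda>\<omega>. (?S k \<omega> - ?S l \<omega>)\<^sup>2) \<and>
      (\<integral>\<omega>. (?S k \<omega> - ?S l \<omega>)\<^sup>2 \<partial>M) \<le> integral\<^sup>L M ?U"
    using k_kl l_kl by (intro integrable_integral_mono_nonneg square_diff_le) auto
  with k_kl l_kl show ?thesis by simp
qed

lemma square_diff_div_le:
  fixes x y :: real
  assumes y: "0 < y" and xy: "y \<le> x"
  shows "(x\<^sup>2 - y\<^sup>2) / x \<le> 2 * (x - y)"
proof -
  have x: "x > 0" using y xy by simp
  have "x\<^sup>2 - y\<^sup>2 = (x - y) * (x + y)" by (simp add: power2_eq_square algebra_simps)
  also have "\<dots> \<le> (x - y) * (2 * x)" using xy by (intro mult_left_mono) auto
  finally have "(x\<^sup>2 - y\<^sup>2) / x \<le> (x - y) * (2 * x) / x" by (rule divide_right_mono) (use x in auto)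
  also have "\<dots> = 2 * (x - y)" using x by simp
  finally show ?thesis .
qed

lemma sum_increments_div_sqrt_le:
  fixes g :: "nat \<Rightarrow> real"
  assumes pos: "\<And>i. i \<le> k \<Longrightarrow> 0 < g i" and mono: "\<And>i. i < k \<Longrightarrow> g i \<le> g (Suc i)"
  shows "(\<Sum>i<k. (g (Suc i) - g i) / sqrt (g (Suc i))) \<le> 2 * (sqrt (g k) - sqrt (g 0))"
proof -
  have "(\<Sum>i<k. (g (Suc i) - g i) / sqrt (g (Suc i))) \<le> (\<Sum>i<k. 2 * (sqrt (g (Suc i)) - sqrt (g i)))"
  proof (rule sum_mono)
    fix i assume "i \<in> {..<k}"
    with pos[of i] pos[of "Suc i"] mono[of i]
    have "((sqrt (g (Suc i)))\<^sup>2 - (sqrt (g i))\<^sup>2) / sqrt (g (Suc i))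
        \<le> 2 * (sqrt (g (Suc i)) - sqrt (g i))"
      by (intro square_diff_div_le) auto
    with pos[of i] pos[of "Suc i"] \<open>i \<in> {..<k}\<close>
    show "(g (Suc i) - g i) / sqrt (g (Suc i)) \<le> 2 * (sqrt (g (Suc i)) - sqrt (g i))"
      by simp
  qed
  also have "\<dots> = 2 * (sqrt (g k) - sqrt (g 0))"
    by (simp only: sum_distrib_left[symmetric] sum_lessThan_telescope[of "\<lambda>i. sqrt (g i)"])
  finally show ?thesis .
qed

definition grid_increment :: "(real \<Rightarrow> real) \<Rightarrow> real \<Rightarrow> nat \<Rightarrow> nat \<Rightarrow> real" where
  "grid_increment f T k j = (if j = 0 then f 0 else f (grid T k j) - f (grid T k (j - 1)))"

lemma riemann_sum_eq_grid_increments: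
  assumes k: "k \<ge> 1" and B0: "B 0 \<omega> = 0"
  shows "riemann_sum B f T k \<omega> = (\<Sum>j<Suc k. grid_increment f T k j * (B T \<omega> - B (grid T k j) \<omega>))"
  unfolding riemann_sum_by_parts[where B=B and \<omega>=\<omega>, OF k B0] sum.lessThan_Suc_shift
  by (simp add: grid_increment_def B0)

lemma grid_increment_nonneg:
  assumes T: "T \<ge> 0" and f_mono: "\<And>x y. 0 \<le> x \<Longrightarrow> x \<le> y \<Longrightarrow> y \<le> T \<Longrightarrow> f x \<le> f y"
    and "f 0 \<ge> 0" and "j \<le> k"
  shows "grid_increment f T k j \<ge> 0"
proof (cases j)
  case (Suc i)
  have "0 \<le> grid T k i" "grid T k i \<le> grid T k j" "grid T k j \<le> T"
    using T Suc \<open>j \<le> k\<close> by (simp_all add: grid_nonneg grid_mono grid_le)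
  with Suc show ?thesis by (simp add: grid_increment_def f_mono)
qed (use assms in \<open>simp add: grid_increment_def\<close>)

lemma sum_grid_increment_decay_le:
  fixes f :: "real \<Rightarrow> real"
  assumes T: "T \<ge> 0" and f_mono: "\<And>x y. 0 \<le> x \<Longrightarrow> x \<le> y \<Longrightarrow> y \<le> T \<Longrightarrow> f x \<le> f y"
    and pos: "\<And>x. 0 \<le> x \<Longrightarrow> x \<le> T \<Longrightarrow> 0 < f x" and f_T: "f T = 1"
    and decay: "\<And>x. 0 \<le> x \<Longrightarrow> x \<le> T \<Longrightarrow> (T - x) powr (2*H) * sqrt (f x) \<le> K"
    and k: "k \<ge> 1"
  shows "(\<Sum>j<Suc k. grid_increment f T k j * \<bar>T - grid T k j\<bar> powr (2*H)) \<le> 2 * K"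
proof -
  let ?t = "grid T k" and ?W = "grid_increment f T k"
  have t_in: "0 \<le> ?t j \<and> ?t j \<le> T" if "j \<le> k" for j
    using T that by (simp add: grid_nonneg grid_le)
  have W_nonneg: "0 \<le> ?W j" if "j \<le> k" for j
    using grid_increment_nonneg[OF T f_mono] pos[of 0] T that by simp
  have "(\<Sum>j<Suc k. ?W j / sqrt (f (?t j)))
      = sqrt (f 0) + (\<Sum>i<k. (f (?t (Suc i)) - f (?t i)) / sqrt (f (?t (Suc i))))"
    unfolding sum.lessThan_Suc_shift using pos[of 0] T by (simp add: grid_increment_def real_div_sqrt)
  also have "\<dots> \<le> sqrt (f 0) + 2 * (sqrt (f (?t k)) - sqrt (f (?t 0)))"
    using pos t_in f_mono grid_mono[OF T]
    by (intro add_left_mono sum_increments_div_sqrt_le) (auto simp: Suc_le_eq)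
  also have "\<dots> \<le> 2" using k f_T pos[of 0] T by (simp add: grid_last)
  finally have weights: "(\<Sum>j<Suc k. ?W j / sqrt (f (?t j))) \<le> 2" .
  have "(\<Sum>j<Suc k. ?W j * \<bar>T - ?t j\<bar> powr (2*H)) \<le> (\<Sum>j<Suc k. ?W j * (K / sqrt (f (?t j))))"
  proof (intro sum_mono mult_left_mono)
    fix j assume "j \<in> {..<Suc k}"
    then have "j \<le> k" by simp
    with decay[of "?t j"] t_in pos show "\<bar>T - ?t j\<bar> powr (2*H) \<le> K / sqrt (f (?t j))"
      by (simp add: pos_le_divide_eq)
    show "0 \<le> ?W j" using W_nonneg \<open>j \<le> k\<close> .
  qed
  also have "\<dots> = K * (\<Sum>j<Suc k. ?W j / sqrt (f (?t j)))"
    unfolding sum_distrib_left by (intro sum.cong refl) (simp add: mult.commute)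
  also have "\<dots> \<le> 2 * K"
    using mult_left_mono[OF weights, of K] decay[of T] T by simp
  finally show ?thesis .
qed

lemma riemann_sum_second_moment_le:
  fixes f :: "real \<Rightarrow> real"
  assumes fbm: "fBm M H B" and T: "T > 0"
    and f_mono: "\<And>x y. 0 \<le> x \<Longrightarrow> x \<le> y \<Longrightarrow> y \<le> T \<Longrightarrow> f x \<le> f y"
    and pos: "\<And>x. 0 \<le> x \<Longrightarrow> x \<le> T \<Longrightarrow> 0 < f x" and f_T: "f T = 1"
    and decay: "\<And>x. 0 \<le> x \<Longrightarrow> x \<le> T \<Longrightarrow> (T - x) powr (2*H) * sqrt (f x) \<le> K"
    and k: "k \<ge> 1"
  shows "integrable M (\<lambda>\<omega>. (riemann_sum B f T k \<omega>)\<^sup>2) \<and> (\<integral>\<omega>. (riemann_sum B f T k \<omega>)\<^sup>2 \<partial>M) \<le> 2 * K"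
proof -
  let ?t = "grid T k" and ?W = "grid_increment f T k"
  have nonneg: "0 \<le> ?W j \<and> 0 \<le> ?t j \<and> 0 \<le> T" if "j \<in> {..<Suc k}" for j
    using grid_increment_nonneg[OF _ f_mono] pos[of 0] T that by (simp add: grid_nonneg)
  have "(\<Sum>j<Suc k. ?W j) = 1"
    unfolding sum.lessThan_Suc_shift using sum_lessThan_telescope[of "\<lambda>j. f (?t j)" k] k f_T
    by (simp add: grid_increment_def grid_last)
  with sum_grid_increment_decay_le[OF _ f_mono pos f_T decay k] T
  have "(\<Sum>j<Suc k. ?W j) * (\<Sum>j<Suc k. ?W j * \<bar>T - ?t j\<bar> powr (2*H)) \<le> 2 * K"
    by simp
  then have "integrable M (\<lambda>\<omega>. (\<Sum>j<Suc k. ?W j * (B T \<omega> - B (?t j) \<omega>))\<^sup>2) \<and>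
      (\<integral>\<omega>. (\<Sum>j<Suc k. ?W j * (B T \<omega> - B (?t j) \<omega>))\<^sup>2 \<partial>M) \<le> 2 * K"
    using fBm_weighted_increments_second_moment_le[where J="{..<Suc k}" and w="?W" and p="?t"
        and q="\<lambda>_. T", OF fbm finite_lessThan nonneg]
    by linarith
  moreover have "riemann_sum B f T k \<omega> = (\<Sum>j<Suc k. ?W j * (B T \<omega> - B (?t j) \<omega>))"
    if "\<omega> \<in> space M" for \<omega>
    using fbm that unfolding fBm_def by (intro riemann_sum_eq_grid_increments k) auto
  ultimately show ?thesis by (rule integrable_square_integral_le_cong)
qed

lemma is_wiener_integral_of_L2_limit:
  assumes [measurable]: "X \<in> borel_measurable M"
    and conv: "\<And>k. k \<ge> 1 \<Longrightarrow> integrable M (\<lambda>\<omega>. (riemann_sum B f T k \<omega> - X \<omega>)\<^sup>2) \<and>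
        (\<integral>\<omega>. (riemann_sum B f T k \<omega> - X \<omega>)\<^sup>2 \<partial>M) \<le> \<delta> k"
    and \<delta>: "\<delta> \<longlonglongrightarrow> 0"
    and bounded: "\<And>k. k \<ge> 1 \<Longrightarrow> integrable M (\<lambda>\<omega>. (riemann_sum B f T k \<omega>)\<^sup>2) \<and>
        (\<integral>\<omega>. (riemann_sum B f T k \<omega>)\<^sup>2 \<partial>M) \<le> K"
  shows "is_wiener_integral M B f T X \<and> (\<integral>\<omega>. (X \<omega>)\<^sup>2 \<partial>M) \<le> 2 * K"
proof -
  let ?S = "riemann_sum B f T"
  have X_sq: "integrable M (\<lambda>\<omega>. (X \<omega>)\<^sup>2) \<and> (\<integral>\<omega>. (X \<omega>)\<^sup>2 \<partial>M) \<le> 2 * \<delta> k + 2 * K"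
    if k: "k \<ge> 1" for k
  proof -
    have "(X \<omega>)\<^sup>2 \<le> 2 * (?S k \<omega> - X \<omega>)\<^sup>2 + 2 * (?S k \<omega>)\<^sup>2" for \<omega>
      using square_diff_le[of "X \<omega>" 0 "?S k \<omega>"] by (simp add: power2_commute)
    then have "integrable M (\<lambda>\<omega>. (X \<omega>)\<^sup>2) \<and>
        (\<integral>\<omega>. (X \<omega>)\<^sup>2 \<partial>M) \<le> (\<integral>\<omega>. 2 * (?S k \<omega> - X \<omega>)\<^sup>2 + 2 * (?S k \<omega>)\<^sup>2 \<partial>M)"
      using conv[OF k] bounded[OF k] by (intro integrable_integral_mono_nonneg) auto
    with conv[OF k] bounded[OF k] show ?thesis by simp
  qed
  have "is_wiener_integral M B f T X"
    unfolding is_wiener_integral_def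
  proof (intro conjI allI)
    show "integrable M (\<lambda>\<omega>. (X \<omega>)\<^sup>2)" using X_sq[of 1] by simp
    show "integrable M (\<lambda>\<omega>. (?S k \<omega> - X \<omega>)\<^sup>2)" for k
      using conv[of k] X_sq[of 1] by (cases "k = 0") (simp_all add: riemann_sum_def)
    show "(\<lambda>k. \<integral>\<omega>. (?S k \<omega> - X \<omega>)\<^sup>2 \<partial>M) \<longlonglongrightarrow> 0"
    proof (rule tendsto_sandwich[OF _ _ tendsto_const \<delta>])
      show "\<forall>\<^sub>F k in sequentially. 0 \<le> (\<integral>\<omega>. (?S k \<omega> - X \<omega>)\<^sup>2 \<partial>M)"
        by (simp add: integral_nonneg_AE)
      show "\<forall>\<^sub>F k in sequentially. (\<integral>\<omega>. (?S k \<omega> - X \<omega>)\<^sup>2 \<partial>M) \<le> \<delta> k"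
        using conv unfolding eventually_sequentially by blast
    qed
  qed simp
  moreover have "(\<integral>\<omega>. (X \<omega>)\<^sup>2 \<partial>M) \<le> 2 * K"
  proof (rule LIMSEQ_le_const)
    show "(\<lambda>k. 2 * \<delta> k + 2 * K) \<longlonglongrightarrow> 2 * K"
      using tendsto_add[OF tendsto_mult[OF tendsto_const \<delta>] tendsto_const, of 2 "2 * K"] by simp
    show "\<exists>N. \<forall>k\<ge>N. (\<integral>\<omega>. (X \<omega>)\<^sup>2 \<partial>M) \<le> 2 * \<delta> k + 2 * K"
      using X_sq by blast
  qed
  ultimately show ?thesis ..
qed

lemma wiener_integral_exists:
  fixes f :: "real \<Rightarrow> real"
  assumes fbm: "fBm M H B" and T: "T > 0" and H: "H > 0"
    and f_mono: "\<And>x y. 0 \<le> x \<Longrightarrow> x \<le> y \<Longrightarrow> y \<le> T \<Longrightarrow> f x \<le> f y"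
    and pos: "\<And>x. 0 \<le> x \<Longrightarrow> x \<le> T \<Longrightarrow> 0 < f x" and f_T: "f T = 1"
    and decay: "\<And>x. 0 \<le> x \<Longrightarrow> x \<le> T \<Longrightarrow> (T - x) powr (2*H) * sqrt (f x) \<le> K"
  shows "\<exists>X. is_wiener_integral M B f T X \<and> (\<integral>\<omega>. (X \<omega>)\<^sup>2 \<partial>M) \<le> 4 * K"
proof -
  let ?S = "riemann_sum B f T"
  define \<delta> where "\<delta> k = 2 * (T / real k) powr (2*H)" for k :: nat
  have \<delta>: "\<delta> \<longlonglongrightarrow> 0"
    unfolding \<delta>_def using T H
    by (intro tendsto_mult_right_zero tendsto_zero_powrI[OF lim_const_over_n tendsto_const]) auto
  have S_meas: "?S k \<in> borel_measurable M" for k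
    using riemann_sum_measurable[OF fbm] T by simp
  have f_0: "f 0 \<ge> 0" using pos[of 0] T by simp
  have cauchy: "integrable M (\<lambda>\<omega>. (?S k \<omega> - ?S l \<omega>)\<^sup>2) \<and> (\<integral>\<omega>. (?S k \<omega> - ?S l \<omega>)\<^sup>2 \<partial>M) \<le> \<delta> k + \<delta> l"
    if "k \<ge> 1" "l \<ge> 1" for k l
    unfolding \<delta>_def by (rule riemann_sum_L2_cauchy[where f=f, OF fbm T H _ f_T f_0 that]) (fact f_mono)
  obtain X where "X \<in> borel_measurable M"
    and conv: "\<And>k. k \<ge> 1 \<Longrightarrow> integrable M (\<lambda>\<omega>. (?S k \<omega> - X \<omega>)\<^sup>2) \<and> (\<integral>\<omega>. (?S k \<omega> - X \<omega>)\<^sup>2 \<partial>M) \<le> \<delta> k"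
    using L2_cauchy_limit[OF S_meas cauchy \<delta>] by blast
  moreover have "integrable M (\<lambda>\<omega>. (?S k \<omega>)\<^sup>2) \<and> (\<integral>\<omega>. (?S k \<omega>)\<^sup>2 \<partial>M) \<le> 2 * K"
    if "k \<ge> 1" for k
    by (rule riemann_sum_second_moment_le[where f=f and K=K, OF fbm T _ _ f_T _ that])
      (fact f_mono, fact pos, fact decay)
  ultimately have "is_wiener_integral M B f T X \<and> (\<integral>\<omega>. (X \<omega>)\<^sup>2 \<partial>M) \<le> 2 * (2 * K)"
    by (intro is_wiener_integral_of_L2_limit[OF _ _ \<delta>])
  then show ?thesis by auto
qed

section \<open>The two coefficient bounds\<close>

lemma set_integrable_coefficient:
  fixes a :: "real \<Rightarrow> real"
  assumes a0: "0 < a0" and a_bounds: "\<forall>t\<in>{0..T}. a0 \<le> a t \<and> a t \<le> a1"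
    and a_meas: "set_borel_measurable lborel {0..T} a" and \<tau>: "0 \<le> \<tau>"
  shows "set_integrable lborel {\<tau>..T} a"
proof -
  have "integrable lborel (\<lambda>x. indicator {\<tau>..T} x *\<^sub>R (indicator {0..T} x * a x))"
  proof (rule integrableI_bounded_set_indicator[where B=a1])
    show "(\<lambda>x. indicator {0..T} x * a x) \<in> borel_measurable lborel"
      using a_meas unfolding set_borel_measurable_def by simp
    show "AE x in lborel. x \<in> {\<tau>..T} \<longrightarrow> norm (indicator {0..T} x * a x) \<le> a1"
    proof (intro AE_I2 impI)
      fix x assume "x \<in> {\<tau>..T}"
      with \<tau> have x: "x \<in> {0..T}" by auto
      with a_bounds have "a0 \<le> a x" "a x \<le> a1" by blast+
      with x a0 show "norm (indicator {0..T} x * a x) \<le> a1" by simp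
    qed
  qed (auto simp: emeasure_lborel_Icc_eq)
  moreover have "(\<lambda>x. indicator {\<tau>..T} x *\<^sub>R (indicator {0..T} x * a x)) =
      (\<lambda>x. indicator {\<tau>..T} x *\<^sub>R a x)"
    using \<tau> by (auto simp: indicator_def)
  ultimately show ?thesis unfolding set_integrable_def by metis
qed

lemma coefficient_integral_lower:
  fixes a :: "real \<Rightarrow> real"
  assumes a0: "0 < a0" and a_bounds: "\<forall>t\<in>{0..T}. a0 \<le> a t \<and> a t \<le> a1"
    and a_meas: "set_borel_measurable lborel {0..T} a" and \<tau>: "0 \<le> \<tau>" "\<tau> \<le> T"
  shows "a0 * (T - \<tau>) \<le> (\<integral>s\<in>{\<tau>..T}. a s \<partial>lborel)"
proof -
  have "a0 * (T - \<tau>) = (\<integral>s\<in>{\<tau>..T}. a0 \<partial>lborel)"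
    using \<tau> by (simp add: set_integral_const)
  also have "\<dots> \<le> (\<integral>s\<in>{\<tau>..T}. a s \<partial>lborel)"
  proof (rule set_integral_mono)
    show "set_integrable lborel {\<tau>..T} (\<lambda>_. a0)"
      by (rule borel_integrable_atLeastAtMost') (rule continuous_on_const)
    show "set_integrable lborel {\<tau>..T} a" by (rule set_integrable_coefficient[OF a0 a_bounds a_meas \<tau>(1)])
    show "\<And>x. x \<in> {\<tau>..T} \<Longrightarrow> a0 \<le> a x" using a_bounds \<tau> by auto
  qed
  finally show ?thesis .
qed

lemma coefficient_integral_antimono:
  fixes a :: "real \<Rightarrow> real"
  assumes a0: "0 < a0" and a_bounds: "\<forall>t\<in>{0..T}. a0 \<le> a t \<and> a t \<le> a1"
    and a_meas: "set_borel_measurable lborel {0..T} a" and xy: "0 \<le> x" "x \<le> y"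
  shows "(\<integral>s\<in>{y..T}. a s \<partial>lborel) \<le> (\<integral>s\<in>{x..T}. a s \<partial>lborel)"
  unfolding set_lebesgue_integral_def
proof (rule integral_mono)
  show "integrable lborel (\<lambda>s. indicator {y..T} s *\<^sub>R a s)"
    "integrable lborel (\<lambda>s. indicator {x..T} s *\<^sub>R a s)"
    using set_integrable_coefficient[OF a0 a_bounds a_meas] xy unfolding set_integrable_def by simp_all
  show "indicator {y..T} s *\<^sub>R a s \<le> indicator {x..T} s *\<^sub>R a s" for s
  proof (cases "s \<in> {x..T}")
    case True
    with xy have "s \<in> {0..T}" by auto
    with a_bounds have "a0 \<le> a s" by blast
    with True xy a0 show ?thesis by (auto simp: indicator_def)
  qed (use xy in \<open>auto simp: indicator_def\<close>)
qed

lemma set_integral_singleton_lborel: "(\<integral>s\<in>{T::real}. a s \<partial>lborel) = (0::real)"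
  unfolding set_lebesgue_integral_def
  by (rule integral_eq_zero_AE, rule AE_mp[OF AE_lborel_singleton[of T]], rule AE_I2)
    (auto simp: indicator_def)

lemma set_integral_exp_decay:
  fixes c T :: real
  assumes c: "c > 0" and T: "T \<ge> 0"
  shows "set_integrable lborel {0..T} (\<lambda>x. exp (- c * (T - x)))"
    and "(\<integral>x\<in>{0..T}. exp (- c * (T - x)) \<partial>lborel) = (1 - exp (- c * T)) / c"
proof -
  have cont: "continuous_on {0..T} (\<lambda>x. exp (- c * (T - x)))"
    by (intro continuous_intros)
  then show "set_integrable lborel {0..T} (\<lambda>x. exp (- c * (T - x)))"
    by (rule borel_integrable_atLeastAtMost')
  define G where "G x = exp (- c * (T - x)) / c" for x
  have "(G has_real_derivative exp (- c * (T - x))) (at x)" for x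
    unfolding G_def using c by (auto intro!: derivative_eq_intros simp: field_simps)
  then have "(LBINT x=ereal 0..ereal T. exp (- c * (T - x))) = G T - G 0"
    using cont T
    by (intro interval_integral_FTC_finite)
      (auto simp: has_real_derivative_iff_has_vector_derivative has_vector_derivative_at_within)
  then show "(\<integral>x\<in>{0..T}. exp (- c * (T - x)) \<partial>lborel) = (1 - exp (- c * T)) / c"
    using T by (simp add: interval_integral_Icc G_def diff_divide_distrib)
qed

lemma source_integral_le:
  fixes a h :: "real \<Rightarrow> real"
  assumes T: "T \<ge> 0" and a0: "0 < a0" and a_bounds: "\<forall>t\<in>{0..T}. a0 \<le> a t \<and> a t \<le> a1"
    and a_meas: "set_borel_measurable lborel {0..T} a" and lam: "lam > 0"
    and Kh: "Kh \<ge> 0" and h_bound: "AE \<tau> in lborel. \<tau> \<in> {0..T} \<longrightarrow> \<bar>h \<tau>\<bar> \<le> Kh"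
  shows "\<bar>\<integral>\<tau>\<in>{0..T}. h \<tau> * exp (- lam * (\<integral>s\<in>{\<tau>..T}. a s \<partial>lborel)) \<partial>lborel\<bar> \<le> Kh / (a0 * lam)"
proof -
  let ?f = "\<lambda>\<tau>. exp (- lam * (\<integral>s\<in>{\<tau>..T}. a s \<partial>lborel))"
  let ?E = "\<lambda>\<tau>. exp (- (a0 * lam) * (T - \<tau>))"
  have c: "a0 * lam > 0" using a0 lam by simp
  have f_le: "?f \<tau> \<le> ?E \<tau>" if "\<tau> \<in> {0..T}" for \<tau>
    using mult_left_mono[OF coefficient_integral_lower[OF a0 a_bounds a_meas, of \<tau>] less_imp_le[OF lam]]
      that
    by (simp add: mult.assoc mult.left_commute)
  have "\<bar>\<integral>\<tau>\<in>{0..T}. h \<tau> * ?f \<tau> \<partial>lborel\<bar> \<le> (\<integral>\<tau>. norm (indicator {0..T} \<tau> *\<^sub>R (h \<tau> * ?f \<tau>)) \<partial>lborel)"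
    using integral_norm_bound[of lborel "\<lambda>\<tau>. indicator {0..T} \<tau> *\<^sub>R (h \<tau> * ?f \<tau>)"]
    unfolding set_lebesgue_integral_def by (simp only: real_norm_def)
  also have "\<dots> \<le> (\<integral>\<tau>. indicator {0..T} \<tau> *\<^sub>R (Kh * ?E \<tau>) \<partial>lborel)"
  proof (rule integral_mono_AE')
    show "integrable lborel (\<lambda>\<tau>. indicator {0..T} \<tau> *\<^sub>R (Kh * ?E \<tau>))"
      using set_integrable_mult_right[OF set_integral_exp_decay(1)[OF c T], of Kh]
      unfolding set_integrable_def .
    show "AE \<tau> in lborel. 0 \<le> indicator {0..T} \<tau> *\<^sub>R (Kh * ?E \<tau>)"
      using Kh by (intro AE_I2) simp
    show "AE \<tau> in lborel.
        norm (indicator {0..T} \<tau> *\<^sub>R (h \<tau> * ?f \<tau>)) \<le> indicator {0..T} \<tau> *\<^sub>R (Kh * ?E \<tau>)"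
      using h_bound
    proof eventually_elim
      case (elim \<tau>)
      show ?case
      proof (cases "\<tau> \<in> {0..T}")
        case True
        then have "\<bar>h \<tau> * ?f \<tau>\<bar> \<le> Kh * ?E \<tau>"
          unfolding abs_mult using elim f_le[OF True] by (intro mult_mono) auto
        then show ?thesis using True by simp
      qed simp
    qed
  qed
  also have "\<dots> = Kh * (\<integral>\<tau>\<in>{0..T}. ?E \<tau> \<partial>lborel)"
    unfolding set_lebesgue_integral_def integral_mult_right_zero[symmetric] by (simp add: ac_simps)
  also have "\<dots> = Kh * ((1 - exp (- (a0 * lam) * T)) / (a0 * lam))"
    unfolding set_integral_exp_decay(2)[OF c T] ..
  also have "\<dots> \<le> Kh / (a0 * lam)"
    using Kh c by (simp add: divide_right_mono mult_left_le)
  finally show ?thesis .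
qed

lemma powr_le_exp_bound:
  fixes y H c :: real
  assumes y: "y \<ge> 0" and H: "0 < H" "H \<le> 1" and c: "c > 0"
  shows "y powr (2*H) \<le> (1 + 16 / c\<^sup>2) * exp (c * y / 2)"
proof -
  have "y powr (2*H) \<le> 1 + y\<^sup>2"
  proof (cases "y \<le> 1")
    case True
    then have "y powr (2*H) \<le> 1" using y H by (intro powr_le1) auto
    then show ?thesis by (simp add: add_increasing2)
  next
    case False
    then have "y powr (2*H) \<le> y powr 2" using H by (intro powr_mono) auto
    then show ?thesis using y by (simp add: powr_numeral)
  qed
  moreover have "y\<^sup>2 \<le> 16 / c\<^sup>2 * exp (c * y / 2)"
  proof -
    have "c * y / 4 \<le> exp (c * y / 4)" using exp_ge_add_one_self[of "c * y / 4"] by linarith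
    then have "(c * y / 4)\<^sup>2 \<le> (exp (c * y / 4))\<^sup>2" using c y by (intro power_mono) auto
    also have "\<dots> = exp (c * y / 2)" by (simp add: power2_eq_square flip: exp_add)
    finally show ?thesis using c by (simp add: power_divide power_mult_distrib field_simps)
  qed
  moreover have "1 \<le> exp (c * y / 2)" using c y by simp
  moreover have "(1 + 16 / c\<^sup>2) * exp (c * y / 2) = exp (c * y / 2) + 16 / c\<^sup>2 * exp (c * y / 2)"
    by (simp add: algebra_simps)
  ultimately show ?thesis by linarith
qed

lemma powr_mult_exp_decay_le:
  fixes y H c lam \<phi> :: real
  assumes y: "y \<ge> 0" and H: "0 < H" "H \<le> 1" and c: "c > 0" and lam: "lam > 0"
    and \<phi>: "c * y \<le> \<phi>"
  shows "y powr (2*H) * exp (- lam * \<phi> / 2) \<le> (1 + 16 / c\<^sup>2) / lam powr (2*H)"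
proof -
  have "y powr (2*H) = (lam * y) powr (2*H) / lam powr (2*H)"
    using y lam by (simp add: powr_mult)
  also have "\<dots> \<le> (1 + 16 / c\<^sup>2) * exp (c * (lam * y) / 2) / lam powr (2*H)"
    using y lam by (intro divide_right_mono powr_le_exp_bound H c) auto
  finally have "y powr (2*H) * exp (- lam * \<phi> / 2)
      \<le> (1 + 16 / c\<^sup>2) * exp (c * (lam * y) / 2) / lam powr (2*H) * exp (- lam * \<phi> / 2)"
    by (rule mult_right_mono) simp
  also have "\<dots> = (1 + 16 / c\<^sup>2) * (exp (c * (lam * y) / 2) * exp (- lam * \<phi> / 2)) / lam powr (2*H)"
    by simp
  also have "\<dots> \<le> (1 + 16 / c\<^sup>2) * 1 / lam powr (2*H)"
  proof (intro divide_right_mono mult_left_mono)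
    show "exp (c * (lam * y) / 2) * exp (- lam * \<phi> / 2) \<le> 1"
      using mult_left_mono[OF \<phi> less_imp_le[OF lam]] by (simp flip: exp_add add: algebra_simps)
  qed (use c in auto)
  finally show ?thesis by simp
qed

lemma divide_powr_le_min:
  fixes c l x p q :: real
  assumes c: "0 \<le> c" and l: "0 < l" and x: "l \<le> x"
  shows "c / x powr p \<le> c * max 1 (l powr (q - p)) / x powr (min p q)"
proof (cases "p \<le> q")
  case True
  have "c * 1 \<le> c * max 1 (l powr (q - p))" by (rule mult_left_mono[OF max.cobounded1 c])
  with True show ?thesis by (simp add: divide_right_mono)
next
  case False
  have "c / x powr p = c * x powr (q - p) / x powr q"
    using l x by (simp add: powr_diff)
  also have "\<dots> \<le> c * l powr (q - p) / x powr q"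
    using False c l x by (intro divide_right_mono mult_left_mono powr_mono2') auto
  also have "\<dots> \<le> c * max 1 (l powr (q - p)) / x powr (min p q)"
    using False c l x by (simp add: divide_right_mono mult_left_mono)
  finally show ?thesis .
qed

lemma noise_integral_le:
  fixes a :: "real \<Rightarrow> real"
  assumes fbm: "fBm M H B" and T: "T > 0" and H: "0 < H" "H \<le> 1"
    and a0: "0 < a0" and a_bounds: "\<forall>t\<in>{0..T}. a0 \<le> a t \<and> a t \<le> a1"
    and a_meas: "set_borel_measurable lborel {0..T} a" and l: "0 < l" "l \<le> lam"
  shows "\<exists>X. is_wiener_integral M B (\<lambda>\<tau>. exp (- lam * (\<integral>s\<in>{\<tau>..T}. a s \<partial>lborel))) T X \<and>
    (\<integral>\<omega>. (X \<omega>)\<^sup>2 \<partial>M) \<le> 4 * (1 + 16 / a0\<^sup>2) * max 1 (l powr (1 - 2*H)) / lam powr (min (2*H) 1)"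
proof -
  have lam: "lam > 0" using l by simp
  have "\<exists>X. is_wiener_integral M B (\<lambda>\<tau>. exp (- lam * (\<integral>s\<in>{\<tau>..T}. a s \<partial>lborel))) T X \<and>
      (\<integral>\<omega>. (X \<omega>)\<^sup>2 \<partial>M) \<le> 4 * ((1 + 16 / a0\<^sup>2) / lam powr (2*H))"
  proof (rule wiener_integral_exists[OF fbm T H(1)])
    fix x y :: real
    assume "0 \<le> x" "x \<le> y" "y \<le> T"
    then show "exp (- lam * (\<integral>s\<in>{x..T}. a s \<partial>lborel)) \<le> exp (- lam * (\<integral>s\<in>{y..T}. a s \<partial>lborel))"
      using coefficient_integral_antimono[OF a0 a_bounds a_meas] lam by (simp add: mult_left_mono)
  next
    fix x :: real
    assume x: "0 \<le> x" "x \<le> T"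
    have "sqrt (exp (- lam * (\<integral>s\<in>{x..T}. a s \<partial>lborel))) = exp (- lam * (\<integral>s\<in>{x..T}. a s \<partial>lborel) / 2)"
      by (rule real_sqrt_unique) (simp_all add: power2_eq_square flip: exp_add)
    then show "(T - x) powr (2*H) * sqrt (exp (- lam * (\<integral>s\<in>{x..T}. a s \<partial>lborel)))
        \<le> (1 + 16 / a0\<^sup>2) / lam powr (2*H)"
      using powr_mult_exp_decay_le[OF _ H a0 lam coefficient_integral_lower[OF a0 a_bounds a_meas x]] x
      by simp
  qed (simp_all add: set_integral_singleton_lborel)
  moreover have "4 * ((1 + 16 / a0\<^sup>2) / lam powr (2*H))
      \<le> 4 * (1 + 16 / a0\<^sup>2) * max 1 (l powr (1 - 2*H)) / lam powr (min (2*H) 1)"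
    using divide_powr_le_min[OF _ l, of "4 * (1 + 16 / a0\<^sup>2)" "2*H" 1] by simp
  ultimately show ?thesis by (meson order_trans)
qed

lemma eigval_ge_first:
  assumes "R0 > 0" and "n \<ge> 1"
  shows "0 < eigval R0 1" and "eigval R0 1 \<le> eigval R0 n"
  using assms by (auto simp: eigval_def divide_right_mono intro!: power_mono)

theorem theorem4p2:
  fixes R0 T a0 a1 H :: real
    and a h :: "real \<Rightarrow> real"
    and M :: "'a measure"
    and B :: "real \<Rightarrow> 'a \<Rightarrow> real"
  assumes R0: "R0 > 0" and T: "T > 0"
    and a0: "0 < a0" and a01: "a0 \<le> a1"
    and a_bounds: "\<forall>t\<in>{0..T}. a0 \<le> a t \<and> a t \<le> a1"
    and a_meas: "set_borel_measurable lborel {0..T} a"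
    and H: "0 < H" "H < 1"
    and fbm: "fBm M H B"
    and h_meas: "set_borel_measurable lborel {0..T} h"
    and h_Linf: "\<exists>K. AE \<tau> in lborel. \<tau> \<in> {0..T} \<longrightarrow> \<bar>h \<tau>\<bar> \<le> K"
    and h_nonneg: "AE \<tau> in lborel. \<tau> \<in> {0..T} \<longrightarrow> h \<tau> \<ge> 0"
    and h_supp: "emeasure lborel {\<tau>\<in>{0..T}. h \<tau> \<noteq> 0} > 0"
  shows "\<exists>C>0. \<forall>n\<ge>1.
     \<bar>\<integral>\<tau>\<in>{0..T}. h \<tau> * exp (- eigval R0 n * (\<integral>s\<in>{\<tau>..T}. a s \<partial>lborel)) \<partial>lborel\<bar>
        \<le> C / eigval R0 n \<and>
     (\<exists>X. is_wiener_integral M B (\<lambda>\<tau>. exp (- eigval R0 n * (\<integral>s\<in>{\<tau>..T}. a s \<partial>lborel))) T X \<and>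
          (\<integral>\<omega>. (X \<omega>)\<^sup>2 \<partial>M) \<le> C / eigval R0 n powr (min (2*H) 1))"
proof -
  let ?u = "\<lambda>n \<tau>. exp (- eigval R0 n * (\<integral>s\<in>{\<tau>..T}. a s \<partial>lborel))"
  obtain K where "AE \<tau> in lborel. \<tau> \<in> {0..T} \<longrightarrow> \<bar>h \<tau>\<bar> \<le> K" using h_Linf by blast
  then have h_bound: "AE \<tau> in lborel. \<tau> \<in> {0..T} \<longrightarrow> \<bar>h \<tau>\<bar> \<le> max K 0"
    by eventually_elim auto
  define C_noise where "C_noise = 4 * (1 + 16 / a0\<^sup>2) * max 1 (eigval R0 1 powr (1 - 2*H))"
  define C where "C = max (max K 0 / a0) C_noise + 1"
  show ?thesis
  proof (intro exI[of _ C] conjI allI impI)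
    have "0 \<le> max K 0 / a0" using a0 by simp
    then show "C > 0" unfolding C_def using max.cobounded1[of "max K 0 / a0" C_noise] by linarith
    fix n :: nat
    assume "n \<ge> 1"
    note lam = eigval_ge_first[OF R0 this]
    have "\<bar>\<integral>\<tau>\<in>{0..T}. h \<tau> * ?u n \<tau> \<partial>lborel\<bar> \<le> max K 0 / (a0 * eigval R0 n)"
      by (rule source_integral_le[OF _ a0 a_bounds a_meas _ _ h_bound]) (use T lam in auto)
    also have "\<dots> \<le> C / eigval R0 n"
      using lam a0 by (simp add: C_def divide_right_mono flip: divide_divide_eq_left)
    finally show "\<bar>\<integral>\<tau>\<in>{0..T}. h \<tau> * ?u n \<tau> \<partial>lborel\<bar> \<le> C / eigval R0 n" .
    obtain X where "is_wiener_integral M B (?u n) T X"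
      and "(\<integral>\<omega>. (X \<omega>)\<^sup>2 \<partial>M) \<le> C_noise / eigval R0 n powr (min (2*H) 1)"
      using noise_integral_le[OF fbm T H(1) _ a0 a_bounds a_meas lam] H unfolding C_noise_def by auto
    moreover have "C_noise / eigval R0 n powr (min (2*H) 1) \<le> C / eigval R0 n powr (min (2*H) 1)"
      by (intro divide_right_mono) (simp_all add: C_def)
    ultimately show "\<exists>X. is_wiener_integral M B (?u n) T X \<and>
        (\<integral>\<omega>. (X \<omega>)\<^sup>2 \<partial>M) \<le> C / eigval R0 n powr (min (2*H) 1)"
      by force
  qed
qed

end
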